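(* Let $\mathfrak L=(V,E,\lambda,\iota)$ be a $\lambda$-graph system presenting a subshift $\Lambda$. If $\mathfrak L$ is $\lambda$-irreducible then $\mathfrak L$ is $\iota$-irreducible, and if $\mathfrak L$ is $\iota$-irreducible then $\Lambda$ is irreducible.
   Context: A $\lambda$-graph system over a finite alphabet $\Sigma$ is $\mathfrak L=(V,E,\lambda,\iota)$ where $V=\bigsqcup_{l\ge0}V_l$ with $V_l$ finite, $E=\bigsqcup_{l\ge0}E_{l,l+1}$ with each $e\in E_{l,l+1}$ having source $s(e)\in V_l$ and terminal $t(e)\in V_{l+1}$, $\lambda:E\to\Sigma$ a labeling, $\iota:V_{l+1}\to V_l$ surjections, every vertex has an outgoing edge and every vertex of $V_{l+1}$ an incoming edge, and (local property) for $u\in V_{l-1}$, $v\in V_{l+1}$ there is a label-preserving bijection between $\{e\in E_{l,l+1}:t(e)=v,\ \iota(s(e))=u\}$ and $\{e\in E_{l-1,l}:s(e)=u,\ t(e)=\iota(v)\}$. A labeled path is a finite sequence of consecutive edges $e_1,\dots,e_n$ with $e_i\in E_{k+i-1,k+i}$ and $t(e_i)=s(e_{i+1})$; its label is $(\lambda(e_1),\dots,\lambda(e_n))$. The presented subshift $\Lambda$ is the subshift whose admissible words are the labels of labeled paths; a subshift is irreducible if for admissible $\mu,\nu$ there is $\eta$ with $\mu\eta\nu$ admissible. $\iota^n$ denotes the $n$-fold composition of the maps $\iota$. $\mathfrak L$ is $\iota$-irreducible if for any $u,v\in V_l$ and any labeled path $\gamma$ leaving $u$ there exist $n$, a labeled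 path $\eta$ of length $n$ leaving $v$ with $\iota^n(t(\eta))=u$, and a labeled path $\gamma'$ leaving $t(\eta)$ with $\iota^n(t(\gamma'))=t(\gamma)$ and $\lambda(\gamma')=\lambda(\gamma)$. $\mathfrak L$ is $\lambda$-irreducible if for any ordered pair $u,v\in V_l$ there is $L(u,v)\in\mathbb N$ such that for every $w\in V_{l+L(u,v)}$ with $\iota^{L(u,v)}(w)=u$ there is a labeled path $\gamma$ with $s(\gamma)=v$, $t(\gamma)=w$. *)

theory Defs
  imports Main
begin

text \<open>A lambda-graph system over the finite alphabet Sigma is given by
  vertex levels V l (the set V_l), edge levels E l (the set E_{l,l+1}),
  source/terminal maps src, trg, labelling lab, and the maps iota : V_{l+1} -> V_l
  (all packaged as total functions, only relevant on the respective sets).\<close>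

definition lambda_graph_system ::
  "'a set \<Rightarrow> (nat \<Rightarrow> 'v set) \<Rightarrow> (nat \<Rightarrow> 'e set) \<Rightarrow> ('e \<Rightarrow> 'v) \<Rightarrow> ('e \<Rightarrow> 'v)
   \<Rightarrow> ('e \<Rightarrow> 'a) \<Rightarrow> ('v \<Rightarrow> 'v) \<Rightarrow> bool" where
  "lambda_graph_system \<Sigma> V E src trg lab iota \<longleftrightarrow>
     finite \<Sigma> \<and>
     (\<forall>l. finite (V l)) \<and>
     (\<forall>l m. l \<noteq> m \<longrightarrow> V l \<inter> V m = {}) \<and>
     (\<forall>l m. l \<noteq> m \<longrightarrow> E l \<inter> E m = {}) \<and>
     (\<forall>l. \<forall>e\<in>E l. src e \<in> V l \<and> trg e \<in> V (Suc l) \<and> lab e \<in> \<Sigma>) \<and>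
     (\<forall>l. iota ` V (Suc l) = V l) \<and>
     (\<forall>l. \<forall>v\<in>V l. \<exists>e\<in>E l. src e = v) \<and>
     (\<forall>l. \<forall>v\<in>V (Suc l). \<exists>e\<in>E l. trg e = v) \<and>
     (\<forall>l. \<forall>u\<in>V l. \<forall>v\<in>V (Suc (Suc l)).
        \<exists>f. bij_betw f {e\<in>E (Suc l). trg e = v \<and> iota (src e) = u}
                       {e\<in>E l. src e = u \<and> trg e = iota v}
            \<and> (\<forall>e\<in>{e\<in>E (Suc l). trg e = v \<and> iota (src e) = u}. lab (f e) = lab e))"

fun lpath :: "(nat \<Rightarrow> 'v set) \<Rightarrow> (nat \<Rightarrow> 'e set) \<Rightarrow> ('e \<Rightarrow> 'v) \<Rightarrow> ('e \<Rightarrow> 'v)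
   \<Rightarrow> nat \<Rightarrow> 'v \<Rightarrow> 'e list \<Rightarrow> 'v \<Rightarrow> bool" where
  "lpath V E src trg k v [] w \<longleftrightarrow> v \<in> V k \<and> w = v"
| "lpath V E src trg k v (e # es) w \<longleftrightarrow>
     v \<in> V k \<and> e \<in> E k \<and> src e = v \<and> lpath V E src trg (Suc k) (trg e) es w"

definition admissible_words ::
  "(nat \<Rightarrow> 'v set) \<Rightarrow> (nat \<Rightarrow> 'e set) \<Rightarrow> ('e \<Rightarrow> 'v) \<Rightarrow> ('e \<Rightarrow> 'v) \<Rightarrow> ('e \<Rightarrow> 'a)
   \<Rightarrow> 'a list set" where
  "admissible_words V E src trg lab =
     {map lab es | es k v w. lpath V E src trg k v es w}"

definition irreducible_subshift :: "'a list set \<Rightarrow> bool" where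
  "irreducible_subshift W \<longleftrightarrow>
     (\<forall>\<mu>\<in>W. \<forall>\<nu>\<in>W. \<exists>\<eta>. \<mu> @ \<eta> @ \<nu> \<in> W)"

definition iota_irreducible ::
  "(nat \<Rightarrow> 'v set) \<Rightarrow> (nat \<Rightarrow> 'e set) \<Rightarrow> ('e \<Rightarrow> 'v) \<Rightarrow> ('e \<Rightarrow> 'v) \<Rightarrow> ('e \<Rightarrow> 'a)
   \<Rightarrow> ('v \<Rightarrow> 'v) \<Rightarrow> bool" where
  "iota_irreducible V E src trg lab iota \<longleftrightarrow>
     (\<forall>l. \<forall>u\<in>V l. \<forall>v\<in>V l. \<forall>\<gamma> x. lpath V E src trg l u \<gamma> x \<longrightarrow>
        (\<exists>n \<eta> y. length \<eta> = n \<and> lpath V E src trg l v \<eta> y \<and> (iota ^^ n) y = u \<and>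
           (\<exists>\<gamma>' z. lpath V E src trg (l + n) y \<gamma>' z \<and> (iota ^^ n) z = x
                  \<and> map lab \<gamma>' = map lab \<gamma>)))"

definition lambda_irreducible ::
  "(nat \<Rightarrow> 'v set) \<Rightarrow> (nat \<Rightarrow> 'e set) \<Rightarrow> ('e \<Rightarrow> 'v) \<Rightarrow> ('e \<Rightarrow> 'v)
   \<Rightarrow> ('v \<Rightarrow> 'v) \<Rightarrow> bool" where
  "lambda_irreducible V E src trg iota \<longleftrightarrow>
     (\<forall>l. \<forall>u\<in>V l. \<forall>v\<in>V l. \<exists>L::nat. \<forall>w\<in>V (l + L). (iota ^^ L) w = u \<longrightarrow>
        (\<exists>\<gamma>. lpath V E src trg l v \<gamma> w))"

end

theory Submission
  imports Defs
begin

text \<open>The local property lets every labeled path be lifted along \<open>\<iota>\<close>: given a path from \<open>u\<close>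
  to \<open>x\<close> and any \<open>z\<close> with \<open>\<iota>\<^sup>m z = x\<close>, there is a path with the same label ending at \<open>z\<close>
  whose source lies over \<open>u\<close>; this is built edge by edge backwards from \<open>z\<close>.
  Lambda-irreducibility then connects \<open>v\<close> to the source of such a lift, which is exactly
  iota-irreducibility. For two admissible words, lifting their paths to a common level
  and applying iota-irreducibility to the second one from the end of the first joins
  them by a single path.\<close>

lemma lgs_iota_image:
  "lambda_graph_system \<Sigma> V E src trg lab iota \<Longrightarrow> iota ` V (Suc l) = V l"
  unfolding lambda_graph_system_def by simp

lemma lgs_edge_endpoints:
  "lambda_graph_system \<Sigma> V E src trg lab iota \<Longrightarrow> e \<in> E l \<Longrightarrow> src e \<in> V l \<and> trg e \<in> V (Suc l)"
  unfolding lambda_graph_system_def by simp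

lemma lgs_level_unique:
  "lambda_graph_system \<Sigma> V E src trg lab iota \<Longrightarrow> x \<in> V l \<Longrightarrow> x \<in> V m \<Longrightarrow> l = m"
  unfolding lambda_graph_system_def by (elim conjE) blast

lemma lgs_funpow_iota_preimage:
  assumes lgs: "lambda_graph_system \<Sigma> V E src trg lab iota" and x: "x \<in> V l"
  shows "\<exists>z\<in>V (l + m). (iota ^^ m) z = x"
proof (induction m)
  case 0
  then show ?case using x by auto
next
  case (Suc m)
  then obtain z' where z': "z' \<in> V (l + m)" "(iota ^^ m) z' = x" by blast
  then obtain z where "z \<in> V (Suc (l + m))" "iota z = z'"
    using lgs_iota_image[OF lgs, of "l + m"] by (metis imageE)
  with z' show ?case by (intro bexI[of _ z]) (auto simp: funpow_swap1)
qed

lemma lgs_lift_edge: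
  assumes lgs: "lambda_graph_system \<Sigma> V E src trg lab iota"
    and "u \<in> V l" "v \<in> V (Suc (Suc l))" "e \<in> E l" "src e = u" "trg e = iota v"
  shows "\<exists>e'\<in>E (Suc l). trg e' = v \<and> iota (src e') = u \<and> lab e' = lab e"
proof -
  let ?A = "{e\<in>E (Suc l). trg e = v \<and> iota (src e) = u}"
  have "\<forall>l. \<forall>u\<in>V l. \<forall>v\<in>V (Suc (Suc l)).
          \<exists>f. bij_betw f {e\<in>E (Suc l). trg e = v \<and> iota (src e) = u}
                         {e\<in>E l. src e = u \<and> trg e = iota v}
              \<and> (\<forall>e\<in>{e\<in>E (Suc l). trg e = v \<and> iota (src e) = u}. lab (f e) = lab e)"
    using lgs unfolding lambda_graph_system_def by (elim conjE) assumption
  then obtain f where f: "bij_betw f ?A {e\<in>E l. src e = u \<and> trg e = iota v}" "\<forall>e\<in>?A. lab (f e) = lab e"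
    using assms(2,3) by blast
  have "e \<in> f ` ?A"
    using f(1) assms(4-6) unfolding bij_betw_def by auto
  then obtain e' where "e' \<in> ?A" "f e' = e" by blast
  with f(2) show ?thesis by force
qed

lemma lpath_endpoints:
  "lpath V E src trg k v es w \<Longrightarrow> v \<in> V k \<and> w \<in> V (k + length es)"
proof (induction es arbitrary: k v)
  case (Cons e es)
  then show ?case using Cons.IH[of "Suc k" "trg e"] by auto
qed simp

lemma lpath_append:
  "lpath V E src trg k v (xs @ ys) w \<longleftrightarrow>
     (\<exists>m. lpath V E src trg k v xs m \<and> lpath V E src trg (k + length xs) m ys w)"
proof (induction xs arbitrary: k v)
  case Nil
  then show ?case using lpath_endpoints[of V E src trg k v ys w] by auto
qed auto

lemma lpath_appendI:
  "lpath V E src trg k v xs m \<Longrightarrow> lpath V E src trg (k + length xs) m ys w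
     \<Longrightarrow> lpath V E src trg k v (xs @ ys) w"
  by (subst lpath_append) blast

lemma lpath_length_eq_level_diff:
  assumes "lambda_graph_system \<Sigma> V E src trg lab iota"
    and "lpath V E src trg l v \<eta> y" "y \<in> V (l + L)"
  shows "length \<eta> = L"
  using lgs_level_unique[OF assms(1) assms(3)] lpath_endpoints[OF assms(2)] by force

lemma lpath_admissible:
  "lpath V E src trg k v es w \<Longrightarrow> map lab es \<in> admissible_words V E src trg lab"
  unfolding admissible_words_def by blast

lemma lpath_lift_iota:
  assumes lgs: "lambda_graph_system \<Sigma> V E src trg lab iota"
  shows "lpath V E src trg l u \<gamma> x \<Longrightarrow> z \<in> V (Suc (l + length \<gamma>)) \<Longrightarrow> iota z = x \<Longrightarrow>
    \<exists>y \<gamma>'. lpath V E src trg (Suc l) y \<gamma>' z \<and> iota y = u \<and> map lab \<gamma>' = map lab \<gamma>"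
proof (induction \<gamma> arbitrary: l u)
  case Nil
  then show ?case by (intro exI[of _ z] exI[of _ "[]"]) auto
next
  case (Cons e es)
  then have u: "u \<in> V l" "e \<in> E l" "src e = u" and p: "lpath V E src trg (Suc l) (trg e) es x"
    by auto
  from Cons.prems(2) have "z \<in> V (Suc (Suc l + length es))" by simp
  from Cons.IH[OF p this Cons.prems(3)] obtain y1 \<gamma>1 where
    \<gamma>1: "lpath V E src trg (Suc (Suc l)) y1 \<gamma>1 z" "iota y1 = trg e" "map lab \<gamma>1 = map lab es"
    by blast
  from lgs_lift_edge[OF lgs u(1) _ u(2,3) \<gamma>1(2)[symmetric]] lpath_endpoints[OF \<gamma>1(1)]
  obtain e' where e': "e' \<in> E (Suc l)" "trg e' = y1" "iota (src e') = u" "lab e' = lab e"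
    by blast
  with lgs_edge_endpoints[OF lgs e'(1)] \<gamma>1 show ?case
    by (intro exI[of _ "src e'"] exI[of _ "e' # \<gamma>1"]) auto
qed

lemma lpath_lift_funpow_iota:
  assumes lgs: "lambda_graph_system \<Sigma> V E src trg lab iota"
    and p: "lpath V E src trg l u \<gamma> x"
  shows "z \<in> V (l + m + length \<gamma>) \<Longrightarrow> (iota ^^ m) z = x \<Longrightarrow>
    \<exists>y \<gamma>'. lpath V E src trg (l + m) y \<gamma>' z \<and> (iota ^^ m) y = u \<and> map lab \<gamma>' = map lab \<gamma>"
proof (induction m arbitrary: z)
  case 0
  then show ?case using p by auto
next
  case (Suc m)
  have iz: "iota z \<in> V (l + m + length \<gamma>)"
    using lgs_iota_image[OF lgs, of "l + m + length \<gamma>"] Suc.prems(1) by auto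
  have "(iota ^^ m) (iota z) = x"
    using Suc.prems(2) by (simp add: funpow_swap1)
  from Suc.IH[OF iz this] obtain y1 \<gamma>1 where
    \<gamma>1: "lpath V E src trg (l + m) y1 \<gamma>1 (iota z)" "(iota ^^ m) y1 = u" "map lab \<gamma>1 = map lab \<gamma>"
    by blast
  have "z \<in> V (Suc (l + m + length \<gamma>1))"
    using Suc.prems(1) map_eq_imp_length_eq[OF \<gamma>1(3)] by simp
  from lpath_lift_iota[OF lgs \<gamma>1(1) this refl] obtain y \<gamma>' where
    "lpath V E src trg (Suc (l + m)) y \<gamma>' z" "iota y = y1" "map lab \<gamma>' = map lab \<gamma>1"
    by blast
  with \<gamma>1 show ?case by (intro exI[of _ y] exI[of _ \<gamma>']) (auto simp: funpow_swap1)
qed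

lemma lpath_raise_level:
  assumes lgs: "lambda_graph_system \<Sigma> V E src trg lab iota"
    and p: "lpath V E src trg l u \<gamma> x"
  shows "\<exists>y \<gamma>' z. lpath V E src trg (l + m) y \<gamma>' z \<and> map lab \<gamma>' = map lab \<gamma>"
proof -
  obtain z where "z \<in> V (l + length \<gamma> + m)" "(iota ^^ m) z = x"
    using lgs_funpow_iota_preimage[OF lgs] lpath_endpoints[OF p] by blast
  then show ?thesis
    using lpath_lift_funpow_iota[OF lgs p] by (metis add.commute add.left_commute)
qed

lemma lambda_irreducible_imp_iota_irreducible:
  assumes lgs: "lambda_graph_system \<Sigma> V E src trg lab iota"
    and li: "lambda_irreducible V E src trg iota"
  shows "iota_irreducible V E src trg lab iota"
  unfolding iota_irreducible_def
proof (intro allI ballI impI)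
  fix l u v \<gamma> x
  assume uv: "u \<in> V l" "v \<in> V l" and p: "lpath V E src trg l u \<gamma> x"
  obtain L where L: "\<forall>w\<in>V (l + L). (iota ^^ L) w = u \<longrightarrow> (\<exists>\<eta>. lpath V E src trg l v \<eta> w)"
    using li uv unfolding lambda_irreducible_def by blast
  obtain z where z: "z \<in> V (l + L + length \<gamma>)" "(iota ^^ L) z = x"
    using lgs_funpow_iota_preimage[OF lgs, of x "l + length \<gamma>" L] lpath_endpoints[OF p]
    by (auto simp: ac_simps)
  obtain y \<gamma>' where \<gamma>': "lpath V E src trg (l + L) y \<gamma>' z" "(iota ^^ L) y = u" "map lab \<gamma>' = map lab \<gamma>"
    using lpath_lift_funpow_iota[OF lgs p z] by blast
  have y: "y \<in> V (l + L)"
    using lpath_endpoints[OF \<gamma>'(1)] by simp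
  with L \<gamma>'(2) obtain \<eta> where \<eta>: "lpath V E src trg l v \<eta> y" by blast
  with lpath_length_eq_level_diff[OF lgs \<eta> y] \<gamma>' z show
    "\<exists>n \<eta> y. length \<eta> = n \<and> lpath V E src trg l v \<eta> y \<and> (iota ^^ n) y = u \<and>
       (\<exists>\<gamma>' z. lpath V E src trg (l + n) y \<gamma>' z \<and> (iota ^^ n) z = x \<and> map lab \<gamma>' = map lab \<gamma>)"
    by blast
qed

lemma iota_irreducible_imp_irreducible_subshift:
  assumes lgs: "lambda_graph_system \<Sigma> V E src trg lab iota"
    and ii: "iota_irreducible V E src trg lab iota"
  shows "irreducible_subshift (admissible_words V E src trg lab)"
  unfolding irreducible_subshift_def
proof (intro ballI)
  fix \<mu> \<nu>
  assume "\<mu> \<in> admissible_words V E src trg lab" "\<nu> \<in> admissible_words V E src trg lab"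
  then obtain \<gamma>1 k1 u1 x1 \<gamma>2 k2 u2 x2 where
    "\<mu> = map lab \<gamma>1" "lpath V E src trg k1 u1 \<gamma>1 x1"
    "\<nu> = map lab \<gamma>2" "lpath V E src trg k2 u2 \<gamma>2 x2"
    unfolding admissible_words_def by blast
  define c where "c = max (k1 + length \<gamma>1) k2"
  obtain y1 \<gamma>1' x1' where \<gamma>1': "lpath V E src trg (c - length \<gamma>1) y1 \<gamma>1' x1'" "\<mu> = map lab \<gamma>1'"
    using lpath_raise_level[OF lgs \<open>lpath V E src trg k1 u1 \<gamma>1 x1\<close>, of "c - length \<gamma>1 - k1"]
      \<open>\<mu> = map lab \<gamma>1\<close> by (auto simp: c_def)
  obtain u2' \<gamma>2' x2' where \<gamma>2': "lpath V E src trg c u2' \<gamma>2' x2'" "\<nu> = map lab \<gamma>2'"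
    using lpath_raise_level[OF lgs \<open>lpath V E src trg k2 u2 \<gamma>2 x2\<close>, of "c - k2"]
      \<open>\<nu> = map lab \<gamma>2\<close> by (auto simp: c_def)
  have len: "c - length \<gamma>1 + length \<gamma>1' = c"
    using map_eq_imp_length_eq[of lab \<gamma>1' lab \<gamma>1] \<gamma>1'(2) \<open>\<mu> = map lab \<gamma>1\<close> by (simp add: c_def)
  with lpath_endpoints[OF \<gamma>1'(1)] lpath_endpoints[OF \<gamma>2'(1)]
  have "x1' \<in> V c" "u2' \<in> V c" by simp_all
  with ii \<gamma>2'(1) obtain \<eta> y \<gamma> z where
    \<eta>: "lpath V E src trg c x1' \<eta> y" "lpath V E src trg (c + length \<eta>) y \<gamma> z" "map lab \<gamma> = \<nu>"
    unfolding iota_irreducible_def \<gamma>2'(2) by metis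
  have "lpath V E src trg (c - length \<gamma>1) y1 (\<gamma>1' @ \<eta> @ \<gamma>) z"
    by (intro lpath_appendI[OF \<gamma>1'(1)]) (simp add: len lpath_appendI[OF \<eta>(1,2)])
  from lpath_admissible[OF this, of lab] \<eta>(3) \<gamma>1'(2)
  show "\<exists>\<eta>. \<mu> @ \<eta> @ \<nu> \<in> admissible_words V E src trg lab" by auto
qed

theorem lemma2p6:
  assumes "lambda_graph_system \<Sigma> V E src trg lab iota"
  shows "(lambda_irreducible V E src trg iota \<longrightarrow> iota_irreducible V E src trg lab iota)
       \<and> (iota_irreducible V E src trg lab iota \<longrightarrow>
            irreducible_subshift (admissible_words V E src trg lab))"
  using lambda_irreducible_imp_iota_irreducible[OF assms]
    iota_irreducible_imp_irreducible_subshift[OF assms] by blast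

end
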